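(* Let $H$ and $K$ be subgroups of a finite group $G$, and suppose $H\not\le C_G(K)$. Then $\Pr(H,K)\le \frac{n+m-1}{nm}$, where $n=|H:C_H(K)|$ and $m=\min_{x\in H\setminus C_H(K)}|K:C_K(x)|$.
   Context: For subsets $X,Y$ of a finite group, $\Pr(X,Y)=|\{(x,y)\in X\times Y: xy=yx\}|/(|X||Y|)$. $C_H(K)$ is the set of elements of $H$ commuting with every element of $K$; $C_K(x)$ the set of elements of $K$ commuting with $x$. *)

theory Defs
  imports "HOL-Algebra.Algebra"
begin

definition comm_prob :: "('a, 'b) monoid_scheme \<Rightarrow> 'a set \<Rightarrow> 'a set \<Rightarrow> real" where
  "comm_prob Gr A B =
     real (card {(a, b). a \<in> A \<and> b \<in> B \<and> monoid.mult Gr a b = monoid.mult Gr b a})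
     / (real (card A) * real (card B))"

definition centralizer_in :: "('a, 'b) monoid_scheme \<Rightarrow> 'a set \<Rightarrow> 'a set \<Rightarrow> 'a set" where
  "centralizer_in Gr A B = {h \<in> A. \<forall>k \<in> B. monoid.mult Gr h k = monoid.mult Gr k h}"

definition elt_centralizer_in :: "('a, 'b) monoid_scheme \<Rightarrow> 'a set \<Rightarrow> 'a \<Rightarrow> 'a set" where
  "elt_centralizer_in Gr B g = {k \<in> B. monoid.mult Gr k g = monoid.mult Gr g k}"

end

theory Submission
  imports Defs
begin

text \<open>Counting commuting pairs by their first coordinate gives
  \<open>|H| |K| Pr(H,K) = (\<Sum>x\<in>H. |C_K(x)|)\<close>. Each element of \<open>C_H(K)\<close> contributes \<open>|K|\<close>,
  every other element of \<open>H\<close> at most \<open>|K|/m\<close>; hence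
  \<open>Pr(H,K) \<le> 1/n + (1 - 1/n)/m = (n + m - 1)/(n m)\<close>.\<close>

lemma centralizer_in_subset: "centralizer_in G A B \<subseteq> A"
  unfolding centralizer_in_def by auto

lemma elt_centralizer_in_subset: "elt_centralizer_in G B x \<subseteq> B"
  unfolding elt_centralizer_in_def by auto

lemma elt_centralizer_in_of_centralizer:
  "x \<in> centralizer_in G A B \<Longrightarrow> elt_centralizer_in G B x = B"
  unfolding centralizer_in_def elt_centralizer_in_def by auto

lemma card_commuting_pairs:
  assumes "finite A" and "finite B"
  shows "card {(a, b). a \<in> A \<and> b \<in> B \<and> a \<otimes>\<^bsub>G\<^esub> b = b \<otimes>\<^bsub>G\<^esub> a}
           = (\<Sum>a\<in>A. card (elt_centralizer_in G B a))"
proof -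
  have "{(a, b). a \<in> A \<and> b \<in> B \<and> a \<otimes>\<^bsub>G\<^esub> b = b \<otimes>\<^bsub>G\<^esub> a} = Sigma A (elt_centralizer_in G B)"
    unfolding elt_centralizer_in_def by auto
  moreover have "finite (elt_centralizer_in G B a)" for a
    using assms(2) elt_centralizer_in_subset finite_subset by metis
  ultimately show ?thesis
    using assms(1) by (simp add: card_SigmaI)
qed

lemma comm_prob_eq_sum:
  assumes "finite A" and "finite B"
  shows "comm_prob G A B
           = (\<Sum>a\<in>A. real (card (elt_centralizer_in G B a))) / (real (card A) * real (card B))"
  unfolding comm_prob_def card_commuting_pairs[OF assms] by simp

lemma comm_prob_le_of_index_bound:
  fixes G :: "('a, 'b) monoid_scheme" and A B :: "'a set" and m :: real
  defines "C \<equiv> centralizer_in G A B"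
  assumes "finite A" and "finite B" and "card C > 0" and "card B > 0" and "m > 0"
    and index_bound: "\<And>x. x \<in> A - C \<Longrightarrow> m * real (card (elt_centralizer_in G B x)) \<le> real (card B)"
  defines "n \<equiv> real (card A) / real (card C)"
  shows "comm_prob G A B \<le> (n + m - 1) / (n * m)"
proof -
  let ?s = "\<lambda>x. real (card (elt_centralizer_in G B x))"
  have CA: "C \<subseteq> A"
    unfolding C_def by (rule centralizer_in_subset)
  have card_CA: "card C \<le> card A"
    using \<open>finite A\<close> CA by (rule card_mono)
  have sum_C: "(\<Sum>x\<in>C. ?s x) = real (card C) * real (card B)"
    unfolding C_def by (simp add: elt_centralizer_in_of_centralizer)
  have "(\<Sum>x\<in>A - C. ?s x) \<le> (\<Sum>x\<in>A - C. real (card B) / m)"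
    using index_bound \<open>m > 0\<close> by (intro sum_mono) (simp add: field_simps mult.commute)
  also have "\<dots> = (real (card A) - real (card C)) * real (card B) / m"
    using card_Diff_subset[OF finite_subset[OF CA \<open>finite A\<close>] CA] card_CA
    by (simp add: of_nat_diff)
  finally have sum_rest: "(\<Sum>x\<in>A - C. ?s x) \<le> (real (card A) - real (card C)) * real (card B) / m" .
  have "(\<Sum>x\<in>A. ?s x) = (\<Sum>x\<in>C. ?s x) + (\<Sum>x\<in>A - C. ?s x)"
    using \<open>finite A\<close> CA by (metis add.commute sum.subset_diff)
  with sum_C sum_rest have sum_bound: "(\<Sum>x\<in>A. ?s x)
      \<le> real (card C) * real (card B) + (real (card A) - real (card C)) * real (card B) / m"
    by linarith
  have "comm_prob G A B
      \<le> (real (card C) * real (card B) + (real (card A) - real (card C)) * real (card B) / m)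
          / (real (card A) * real (card B))"
    unfolding comm_prob_eq_sum[OF \<open>finite A\<close> \<open>finite B\<close>] using sum_bound by (simp add: divide_right_mono)
  also have "\<dots> = (n + m - 1) / (n * m)"
    using \<open>card C > 0\<close> \<open>card B > 0\<close> \<open>m > 0\<close> card_CA unfolding n_def by (simp add: field_simps)
  finally show ?thesis .
qed

lemma (in group) one_in_centralizer_in:
  "subgroup H G \<Longrightarrow> subgroup K G \<Longrightarrow> \<one> \<in> centralizer_in G H K"
  unfolding centralizer_in_def by (auto simp: subgroup.one_closed dest: subgroup.mem_carrier)

lemma (in group) card_elt_centralizer_in_pos:
  assumes "subgroup K G" and "finite K" and "x \<in> carrier G"
  shows "card (elt_centralizer_in G K x) > 0"
proof -
  have "\<one> \<in> elt_centralizer_in G K x"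
    using assms unfolding elt_centralizer_in_def by (simp add: subgroup.one_closed)
  then show ?thesis
    using assms(2) elt_centralizer_in_subset finite_subset card_gt_0_iff by (metis empty_iff)
qed

theorem lemma2p4:
  fixes G :: "('a, 'b) monoid_scheme" and H K :: "'a set"
  assumes "group G" and "finite (carrier G)"
    and "subgroup H G" and "subgroup K G"
    and "\<not> H \<subseteq> centralizer_in G (carrier G) K"
  defines "n \<equiv> real (card H) / real (card (centralizer_in G H K))"
    and "m \<equiv> Min ((\<lambda>x. real (card K) / real (card (elt_centralizer_in G K x)))
                    ` (H - centralizer_in G H K))"
  shows "comm_prob G H K \<le> (n + m - 1) / (n * m)"
proof -
  interpret group G by fact
  let ?index = "\<lambda>x. real (card K) / real (card (elt_centralizer_in G K x))"
  have H_fin: "finite H" and K_fin: "finite K"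
    using assms(2-4) subgroup.subset finite_subset by metis+
  have H_carrier: "H \<subseteq> carrier G"
    using assms(3) by (rule subgroup.subset)
  have K_pos: "card K > 0"
    using K_fin assms(4) subgroup.one_closed card_gt_0_iff by blast
  have C_pos: "card (centralizer_in G H K) > 0"
    using one_in_centralizer_in[OF assms(3,4)] H_fin centralizer_in_subset finite_subset
      card_gt_0_iff by (metis empty_iff)
  have "H - centralizer_in G H K \<noteq> {}"
    using assms(5) H_carrier unfolding centralizer_in_def by auto
  then have m_in: "m \<in> ?index ` (H - centralizer_in G H K)"
    unfolding m_def using H_fin by (intro Min_in) auto
  have m_pos: "m > 0"
    using m_in card_elt_centralizer_in_pos[OF assms(4) K_fin] H_carrier K_pos by auto
  have index_bound: "m * real (card (elt_centralizer_in G K x)) \<le> real (card K)"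
    if "x \<in> H - centralizer_in G H K" for x
  proof -
    have "m \<le> ?index x"
      unfolding m_def using H_fin that by (intro Min_le) auto
    then show ?thesis
      using card_elt_centralizer_in_pos[OF assms(4) K_fin, of x] H_carrier that
      by (auto simp: le_divide_eq)
  qed
  show ?thesis
    unfolding n_def by (rule comm_prob_le_of_index_bound[OF H_fin K_fin C_pos K_pos m_pos index_bound])
qed

end
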